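(* Let $I\subseteq\mathbb K[x_1,\dots,x_n]$ be an $\mathfrak m$-primary monomial ideal with $\mu_i=x_i^{d_i}\in G(I)$, and let $J=\langle\mu_1,\dots,\mu_n\rangle$. Then $I$ is very good if and only if $I^2=IJ$.
   Context: Let $\mathbb K$ be a field, $R=\mathbb K[x_1,\dots,x_n]$, $\mathfrak m=\langle x_1,\dots,x_n\rangle$, $\mathbb N=\{0,1,2,\dots\}$. A monomial $x_1^{\alpha_1}\cdots x_n^{\alpha_n}$ is identified with the point $(\alpha_1,\dots,\alpha_n)\in\mathbb N^n$. For a monomial ideal $I$, $G(I)$ denotes its (unique) minimal monomial generating set. If $I$ is an $\mathfrak m$-primary monomial ideal, then for each $i$ there is a unique $d_i\ge1$ with $x_i^{d_i}\in G(I)$; write $\mu_i=x_i^{d_i}$. For $(a_1,\dots,a_n)\in\mathbb N^n$ the box associated to $I$ is $B_{a_1,\dots,a_n}=([a_1d_1,(a_1+1)d_1]\times\cdots\times[a_nd_n,(a_n+1)d_n])\cap\mathbb N^n$; a monomial belongs to a box if its exponent vector does. An $\mathfrak m$-primary monomial ideal $I$ is called good if for every integer $l\ge1$, every element of $G(I^l)$ belongs to some box $B_{a_1,\dots,a_n}$ with $a_1+\dots+a_n=l-1$. For a good ideal $I$ and $a=(a_1,\dots,a_n)\in\mathbb N^n$, with $l=a_1+\dots+a_n+1$, define $I_{a_1,\dots,a_n}=\left\langle \frac{m}{\mu_1^{a_1}\cdots\mu_n^{a_n}} : m\in B_{a_1,\dots,a_n}\cap G(I^l)\right\rangle$. A good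 ideal $I$ is called very good if $I_{a}=I$ for all $a\in\mathbb N^n$. *)

theory Defs
  imports Main
begin

text \<open>Monomials of K[x_1,...,x_n] are encoded by exponent vectors
  a :: nat => nat with a i = 0 for i >= n (variable x_(i+1) has index i).
  A monomial ideal is encoded by the set of exponent vectors of the monomials
  it contains (which determines it). Divisibility of monomials is the
  pointwise order on exponent vectors.\<close>

definition mons :: "nat \<Rightarrow> (nat \<Rightarrow> nat) set" where
  "mons n = {a. \<forall>i. n \<le> i \<longrightarrow> a i = 0}"

definition mono_ideal :: "nat \<Rightarrow> (nat \<Rightarrow> nat) set \<Rightarrow> bool" where
  "mono_ideal n I \<longleftrightarrow> I \<subseteq> mons n \<and>
     (\<forall>a\<in>I. \<forall>b\<in>mons n. a \<le> b \<longrightarrow> b \<in> I)"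

definition gen_ideal :: "nat \<Rightarrow> (nat \<Rightarrow> nat) set \<Rightarrow> (nat \<Rightarrow> nat) set" where
  "gen_ideal n G = {c \<in> mons n. \<exists>g\<in>G. g \<le> c}"

definition gens :: "(nat \<Rightarrow> nat) set \<Rightarrow> (nat \<Rightarrow> nat) set" where
  "gens I = {a \<in> I. \<forall>b\<in>I. b \<le> a \<longrightarrow> b = a}"

definition prod_ideal :: "nat \<Rightarrow> (nat \<Rightarrow> nat) set \<Rightarrow> (nat \<Rightarrow> nat) set \<Rightarrow> (nat \<Rightarrow> nat) set" where
  "prod_ideal n I J = gen_ideal n {(\<lambda>i. a i + b i) | a b. a \<in> I \<and> b \<in> J}"

primrec ipow :: "nat \<Rightarrow> (nat \<Rightarrow> nat) set \<Rightarrow> nat \<Rightarrow> (nat \<Rightarrow> nat) set" where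
  "ipow n I 0 = mons n"
| "ipow n I (Suc l) = prod_ideal n I (ipow n I l)"

definition rad :: "nat \<Rightarrow> (nat \<Rightarrow> nat) set \<Rightarrow> (nat \<Rightarrow> nat) set" where
  "rad n I = {a \<in> mons n. \<exists>k\<ge>1. (\<lambda>i. k * a i) \<in> I}"

definition max_ideal :: "nat \<Rightarrow> (nat \<Rightarrow> nat) set" where
  "max_ideal n = gen_ideal n {(\<lambda>j. if j = i then 1 else 0) | i. i < n}"

definition m_primary :: "nat \<Rightarrow> (nat \<Rightarrow> nat) set \<Rightarrow> bool" where
  "m_primary n I \<longleftrightarrow> mono_ideal n I \<and> rad n I = max_ideal n"

definition xpow :: "nat \<Rightarrow> nat \<Rightarrow> (nat \<Rightarrow> nat)" where
  "xpow i d = (\<lambda>j. if j = i then d else 0)"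

definition dI :: "(nat \<Rightarrow> nat) set \<Rightarrow> nat \<Rightarrow> nat" where
  "dI I i = (THE d. 1 \<le> d \<and> xpow i d \<in> gens I)"

definition box :: "nat \<Rightarrow> (nat \<Rightarrow> nat) set \<Rightarrow> (nat \<Rightarrow> nat) \<Rightarrow> (nat \<Rightarrow> nat) set" where
  "box n I a = {b \<in> mons n. \<forall>i<n. a i * dI I i \<le> b i \<and> b i \<le> (a i + 1) * dI I i}"

definition good :: "nat \<Rightarrow> (nat \<Rightarrow> nat) set \<Rightarrow> bool" where
  "good n I \<longleftrightarrow> m_primary n I \<and>
     (\<forall>l\<ge>1. \<forall>m\<in>gens (ipow n I l).
        \<exists>a\<in>mons n. (\<Sum>i<n. a i) = l - 1 \<and> m \<in> box n I a)"

definition sub_ideal :: "nat \<Rightarrow> (nat \<Rightarrow> nat) set \<Rightarrow> (nat \<Rightarrow> nat) \<Rightarrow> (nat \<Rightarrow> nat) set" where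
  "sub_ideal n I a = gen_ideal n
     {(\<lambda>i. m i - a i * dI I i) | m. m \<in> box n I a \<inter> gens (ipow n I ((\<Sum>i<n. a i) + 1))}"

definition very_good :: "nat \<Rightarrow> (nat \<Rightarrow> nat) set \<Rightarrow> bool" where
  "very_good n I \<longleftrightarrow> good n I \<and> (\<forall>a\<in>mons n. sub_ideal n I a = I)"

end

theory Submission
  imports Defs "HOL-Library.Function_Algebras"
begin

text \<open>Write \<open>\<mu>\<^sup>b = \<mu>\<^sub>1^b\<^sub>1 \<cdots> \<mu>\<^sub>n^b\<^sub>n\<close>. If \<open>I\<^sup>2 = IJ\<close>, an induction gives \<open>I\<^bsup>k+1\<^esup> = IJ\<^sup>k\<close>, so every
  minimal generator of \<open>I\<^bsup>k+1\<^esup>\<close> has the form \<open>g \<mu>\<^sup>b\<close> with \<open>g \<in> G(I)\<close> and \<open>|b| = k\<close>;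
  as \<open>g\<^sub>i \<le> d\<^sub>i\<close>, it lies in the box \<open>B\<^sub>b\<close>, so \<open>I\<close> is good. Two such products with \<open>|a| = |b|\<close>
  can only be comparable in a trivial way: if \<open>a \<noteq> b\<close> then \<open>g\<close> must be a pure power \<open>\<mu>\<^sub>i\<close>.
  This shows that \<open>g \<mu>\<^sup>a\<close> is a minimal generator of \<open>I\<^bsup>|a|+1\<^esup>\<close> for every \<open>g \<in> G(I)\<close>, and that
  dividing a minimal generator in \<open>B\<^sub>a\<close> by \<open>\<mu>\<^sup>a\<close> lands in \<open>I\<close>; hence \<open>I\<^sub>a = I\<close>.
  Conversely, if \<open>I\<close> is very good, each minimal generator \<open>m\<close> of \<open>I\<^sup>2\<close> lies in some box
  \<open>B\<^bsub>e\<^sub>j\<^esub>\<close>, and \<open>I\<^bsub>e\<^sub>j\<^esub> = I\<close> says \<open>m/\<mu>\<^sub>j \<in> I\<close>, i.e. \<open>m \<in> IJ\<close>.\<close>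

section \<open>Monomial ideals as sets of exponent vectors\<close>

lemma mem_gen_ideal: "c \<in> gen_ideal n G \<longleftrightarrow> c \<in> mons n \<and> (\<exists>g\<in>G. g \<le> c)"
  by (simp add: gen_ideal_def)

lemma mem_prod_ideal: "c \<in> prod_ideal n A B \<longleftrightarrow> c \<in> mons n \<and> (\<exists>a\<in>A. \<exists>b\<in>B. a + b \<le> c)"
  by (auto simp: prod_ideal_def gen_ideal_def plus_fun_def)

lemma prod_ideal_mono: "B \<subseteq> B' \<Longrightarrow> prod_ideal n A B \<subseteq> prod_ideal n A B'"
  unfolding subset_iff mem_prod_ideal by blast

lemma mem_box:
  "m \<in> box n I a \<longleftrightarrow> m \<in> mons n \<and> (\<forall>i<n. a i * dI I i \<le> m i \<and> m i \<le> (a i + 1) * dI I i)"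
  by (simp add: box_def)

lemma mem_sub_ideal:
  "x \<in> sub_ideal n I a \<longleftrightarrow> x \<in> mons n \<and>
     (\<exists>m. m \<in> box n I a \<and> m \<in> gens (ipow n I (Suc (\<Sum>i<n. a i))) \<and> m - a * dI I \<le> x)"
  by (auto simp: sub_ideal_def mem_gen_ideal fun_diff_def times_fun_def)

lemma zero_mons: "0 \<in> mons n"
  by (simp add: mons_def)

lemma mons_add: "a \<in> mons n \<Longrightarrow> b \<in> mons n \<Longrightarrow> a + b \<in> mons n"
  by (simp add: mons_def)

lemma mons_mult: "a \<in> mons n \<Longrightarrow> a * d \<in> mons n"
  by (simp add: mons_def)

lemma mons_diff: "a \<in> mons n \<Longrightarrow> a - b \<in> mons n"
  by (simp add: mons_def)

lemma xpow_mons: "i < n \<Longrightarrow> xpow i e \<in> mons n"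
  by (simp add: mons_def xpow_def)

lemma xpow_0: "xpow i 0 = 0"
  by (simp add: xpow_def fun_eq_iff)

lemma xpow_1_mult [simp]: "xpow i (Suc 0) * d = xpow i (d i)" \<comment> \<open>\<open>Suc 0\<close> is the simp normal form of \<open>1\<close>\<close>
  by (simp add: xpow_def fun_eq_iff)

lemma xpow_mono: "e \<le> e' \<Longrightarrow> xpow i e \<le> xpow i e'"
  by (simp add: xpow_def le_fun_def)

lemma xpow_inject: "xpow i e = xpow i e' \<Longrightarrow> e = e'"
  by (drule fun_cong[of _ _ i]) (simp add: xpow_def)

lemma sum_xpow: "i < n \<Longrightarrow> (\<Sum>j<n. xpow i e j) = e"
  by (simp add: xpow_def)

lemma exists_less_of_sum_less:
  fixes f g :: "nat \<Rightarrow> nat"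
  assumes "(\<Sum>i<n. f i) < (\<Sum>i<n. g i)"
  shows "\<exists>i<n. f i < g i"
  using sum_mono[of "{..<n}" g f] assms by (meson leD lessThan_iff not_less)

lemma sum_less_of_less:
  fixes b c :: "nat \<Rightarrow> nat"
  assumes "c \<in> mons n" "b < c"
  shows "(\<Sum>i<n. b i) < (\<Sum>i<n. c i)"
proof -
  have le: "\<forall>i\<in>{..<n}. b i \<le> c i"
    using assms(2) by (simp add: less_fun_def le_fun_def)
  obtain i where i: "b i < c i"
    using assms(2) unfolding less_fun_def le_fun_def by (meson not_le)
  have "i < n"
  proof (rule ccontr)
    assume "\<not> i < n"
    then have "c i = 0"
      using assms(1) by (simp add: mons_def)
    with i show False by simp
  qed
  then show ?thesis
    using le i by (intro sum_strict_mono_ex1) auto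
qed

lemma exists_less_of_sum_eq:
  fixes a b :: "nat \<Rightarrow> nat"
  assumes "a \<in> mons n" "b \<in> mons n" "a \<noteq> b" "(\<Sum>i<n. a i) = (\<Sum>i<n. b i)"
  shows "\<exists>i<n. a i < b i"
proof (rule ccontr)
  assume contra: "\<not> ?thesis"
  have "b \<le> a"
    unfolding le_fun_def
  proof
    fix i
    show "b i \<le> a i"
      using contra assms(2) by (cases "i < n") (auto simp: mons_def not_less)
  qed
  then have "(\<Sum>i<n. b i) < (\<Sum>i<n. a i)"
    using assms(1,3) by (intro sum_less_of_less) auto
  with assms(4) show False by simp
qed

lemma mons_sum_eq_0: "b \<in> mons n \<Longrightarrow> (\<Sum>i<n. b i) = 0 \<Longrightarrow> b = 0"
  by (auto simp: mons_def fun_eq_iff) (metis lessThan_iff not_le)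

lemma mons_sum_Suc_decomp:
  assumes "b \<in> mons n" "(\<Sum>i<n. b i) = Suc k"
  obtains j b' where "j < n" "b' \<in> mons n" "(\<Sum>i<n. b' i) = k" "b = b' + xpow j 1"
proof -
  obtain j where j: "j < n" "0 < b j"
    using exists_less_of_sum_less[where f = "\<lambda>_. 0" and g = b and n = n] assms(2) by auto
  define b' where "b' = b - xpow j 1"
  have b: "b = b' + xpow j 1"
    using j(2) by (auto simp: b'_def xpow_def fun_eq_iff)
  have "(\<Sum>i<n. b i) = (\<Sum>i<n. b' i) + 1"
    by (subst b) (simp add: sum.distrib sum_xpow j(1))
  then have "(\<Sum>i<n. b' i) = k"
    using assms(2) by simp
  moreover have "b' \<in> mons n"
    unfolding b'_def using assms(1) by (rule mons_diff)
  ultimately show ?thesis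
    using that j(1) b by blast
qed

lemma eq_add_xpow_of_le:
  fixes b c :: "nat \<Rightarrow> nat"
  assumes "c \<in> mons n" "b \<le> c" "(\<Sum>i<n. c i) = Suc (\<Sum>i<n. b i)"
  obtains k where "k < n" "c = b + xpow k 1"
proof -
  have c: "c = b + (c - b)"
    using assms(2) by (auto simp: le_fun_def fun_eq_iff)
  have "(\<Sum>i<n. c i) = (\<Sum>i<n. b i) + (\<Sum>i<n. (c - b) i)"
    using assms(2) by (simp add: le_fun_def sum.distrib[symmetric])
  then have "(\<Sum>i<n. (c - b) i) = Suc 0"
    using assms(3) by simp
  then obtain k f where k: "k < n" "c - b = f + xpow k 1" and f: "f \<in> mons n" "(\<Sum>i<n. f i) = 0"
    by (rule mons_sum_Suc_decomp[OF mons_diff[OF assms(1)]])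
  from f have "f = 0"
    by (rule mons_sum_eq_0)
  then show ?thesis
    using that[OF k(1)] k(2) c by simp
qed

lemma exists_gens_le:
  assumes "S \<subseteq> mons n" "c \<in> S"
  shows "\<exists>g\<in>gens S. g \<le> c"
  using assms(2)
proof (induction "\<Sum>i<n. c i" arbitrary: c rule: less_induct)
  case less
  show ?case
  proof (cases "c \<in> gens S")
    case False
    then obtain b where b: "b \<in> S" "b < c"
      using less.prems by (auto simp: gens_def less_le)
    then have "(\<Sum>i<n. b i) < (\<Sum>i<n. c i)"
      using assms(1) less.prems by (intro sum_less_of_less) auto
    then obtain g where "g \<in> gens S" "g \<le> b"
      using less.hyps b(1) by blast
    then show ?thesis
      using b(2) by (meson less_imp_le order_trans)
  qed auto
qed

lemma xpow_Least_in_gens: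
  assumes "xpow i k \<in> S"
  shows "xpow i (LEAST e. xpow i e \<in> S) \<in> gens S"
proof -
  let ?e = "LEAST e. xpow i e \<in> S"
  have "b = xpow i ?e" if b: "b \<in> S" "b \<le> xpow i ?e" for b
  proof -
    have b_xpow: "b = xpow i (b i)"
    proof
      fix j
      have "b j \<le> xpow i ?e j"
        using b(2) by (simp add: le_fun_def)
      then show "b j = xpow i (b i) j"
        by (simp add: xpow_def split: if_splits)
    qed
    then have "?e \<le> b i"
      using b(1) by (metis Least_le)
    moreover have "b i \<le> ?e"
      using b(2) by (auto simp: le_fun_def xpow_def dest: spec[of _ i])
    ultimately show ?thesis
      using b_xpow by simp
  qed
  then show ?thesis
    using LeastI[of "\<lambda>e. xpow i e \<in> S", OF assms] by (auto simp: gens_def)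
qed

lemma xpow_in_gens_unique:
  assumes "xpow i e \<in> gens S" "xpow i e' \<in> gens S"
  shows "e = e'"
proof -
  have "xpow i e = xpow i e'"
  proof (cases "e \<le> e'")
    case True
    then have "xpow i e \<le> xpow i e'"
      by (rule xpow_mono)
    then show ?thesis
      using assms by (simp add: gens_def)
  next
    case False
    then have "xpow i e' \<le> xpow i e"
      by (intro xpow_mono) simp
    then show ?thesis
      using assms by (simp add: gens_def) (metis)
  qed
  then show ?thesis
    by (rule xpow_inject)
qed

lemma ipow_1:
  assumes "mono_ideal n I"
  shows "ipow n I 1 = I"
proof (intro set_eqI iffI)
  fix c
  assume "c \<in> ipow n I 1"
  then obtain a b where c: "c \<in> mons n" "a \<in> I" "a + b \<le> c"
    unfolding One_nat_def ipow.simps mem_prod_ideal by blast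
  have "a \<le> c"
    using c(3) unfolding le_fun_def plus_fun_apply by (metis add_leD1)
  then show "c \<in> I"
    using assms c(1,2) by (simp add: mono_ideal_def)
next
  fix c
  assume "c \<in> I"
  then have "c \<in> mons n" "c + 0 \<le> c"
    using assms by (auto simp: mono_ideal_def)
  then show "c \<in> ipow n I 1"
    using \<open>c \<in> I\<close> zero_mons unfolding One_nat_def ipow.simps mem_prod_ideal by blast
qed

lemma ipow_2: "mono_ideal n I \<Longrightarrow> ipow n I 2 = prod_ideal n I I"
  using ipow_1[of n I] by (simp add: numeral_2_eq_2)

section \<open>The pure powers \<open>\<mu>\<^sub>i\<close> of an m-primary ideal\<close>

locale m_primary_monomial_ideal =
  fixes n :: nat and I :: "(nat \<Rightarrow> nat) set"
  assumes m_primary: "m_primary n I"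
begin

text \<open>With pointwise arithmetic on exponent vectors, \<open>b * d\<close> is the exponent vector of \<open>\<mu>\<^sup>b\<close>.\<close>

abbreviation d :: "nat \<Rightarrow> nat" where
  "d \<equiv> dI I"

abbreviation J :: "(nat \<Rightarrow> nat) set" where
  "J \<equiv> gen_ideal n {xpow i (d i) | i. i < n}"

lemma mono_ideal: "mono_ideal n I"
  using m_primary by (simp add: m_primary_def)

lemma I_subset_mons: "I \<subseteq> mons n"
  using mono_ideal by (simp add: mono_ideal_def)

lemma I_upward: "a \<in> I \<Longrightarrow> b \<in> mons n \<Longrightarrow> a \<le> b \<Longrightarrow> b \<in> I"
  using mono_ideal by (auto simp: mono_ideal_def)

lemma xpow_1_in_max_ideal: "i < n \<Longrightarrow> xpow i 1 \<in> max_ideal n"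
  unfolding max_ideal_def mem_gen_ideal xpow_def by (auto simp: mons_def)

lemma zero_notin_I: "0 \<notin> I"
proof
  assume "0 \<in> I"
  then have "0 \<in> max_ideal n"
    using m_primary zero_mons by (force simp: m_primary_def rad_def zero_fun_def)
  then obtain i :: nat where "(\<lambda>j. if j = i then 1 else 0) \<le> (0 :: nat \<Rightarrow> nat)"
    unfolding max_ideal_def mem_gen_ideal by blast
  then show False
    by (auto simp: le_fun_def dest: spec[of _ i])
qed

lemma exists_xpow_in_I:
  assumes "i < n"
  obtains k where "xpow i k \<in> I"
proof -
  have "xpow i 1 \<in> rad n I"
    using m_primary xpow_1_in_max_ideal[OF assms] by (simp add: m_primary_def)
  then obtain k where "(\<lambda>j. k * xpow i 1 j) \<in> I"
    by (auto simp: rad_def)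
  moreover have "(\<lambda>j. k * xpow i 1 j) = xpow i k"
    by (simp add: xpow_def fun_eq_iff)
  ultimately show ?thesis
    using that by simp
qed

lemma dI_spec:
  assumes "i < n"
  shows "1 \<le> d i \<and> xpow i (d i) \<in> gens I"
proof -
  obtain k where "xpow i k \<in> I"
    using exists_xpow_in_I assms .
  then have gen: "xpow i (LEAST e. xpow i e \<in> I) \<in> gens I" (is "xpow i ?e \<in> _")
    by (rule xpow_Least_in_gens)
  have "?e \<noteq> 0"
  proof
    assume "?e = 0"
    then have "0 \<in> I"
      using gen by (simp add: gens_def xpow_0)
    then show False
      using zero_notin_I by simp
  qed
  then have spec: "1 \<le> ?e \<and> xpow i ?e \<in> gens I"
    using gen by simp
  moreover have "d i = ?e"
    unfolding dI_def using spec xpow_in_gens_unique by (intro the_equality) blast+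
  ultimately show ?thesis
    by simp
qed

lemma dI_pos: "i < n \<Longrightarrow> 0 < d i"
  using dI_spec by fastforce

lemma xpow_dI_in_gens: "i < n \<Longrightarrow> xpow i (d i) \<in> gens I"
  using dI_spec by blast

lemma xpow_dI_in_I: "i < n \<Longrightarrow> xpow i (d i) \<in> I"
  using xpow_dI_in_gens by (simp add: gens_def)

lemma gens_eq_xpow_dI:
  assumes "g \<in> gens I" "i < n" "d i \<le> g i"
  shows "g = xpow i (d i)"
proof -
  have "xpow i (d i) \<le> g"
    using assms(3) by (simp add: xpow_def le_fun_def)
  then show ?thesis
    using assms(1) xpow_dI_in_I[OF assms(2)] by (auto simp: gens_def)
qed

lemma gens_le_dI:
  assumes "g \<in> gens I" "i < n"
  shows "g i \<le> d i"
proof (rule ccontr)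
  assume "\<not> g i \<le> d i"
  moreover have "g = xpow i (d i)"
    using calculation assms by (intro gens_eq_xpow_dI) auto
  ultimately show False
    by (simp add: xpow_def)
qed

lemma mem_J: "c \<in> J \<longleftrightarrow> c \<in> mons n \<and> (\<exists>i<n. xpow i (d i) \<le> c)"
  by (auto simp: mem_gen_ideal)

lemma J_subset_I: "J \<subseteq> I"
  unfolding subset_iff mem_J using I_upward xpow_dI_in_I by blast

lemma add_mult_dI_in_box:
  assumes "g \<in> gens I" "b \<in> mons n"
  shows "g + b * d \<in> box n I b"
proof -
  have "g \<in> mons n"
    using assms(1) I_subset_mons by (auto simp: gens_def)
  then show ?thesis
    using assms gens_le_dI by (auto simp: mem_box intro: mons_add mons_mult)
qed

lemma mult_dI_le_of_mem_box:
  assumes "m \<in> box n I a" "a \<in> mons n"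
  shows "a * d \<le> m"
  unfolding le_fun_def
proof
  fix i
  show "(a * d) i \<le> m i"
    using assms by (cases "i < n") (auto simp: mem_box mons_def)
qed

lemma gens_add_mult_dI_eq:
  assumes "g \<in> gens I" "i < n" "b i < a i" "a i * d i \<le> g i + b i * d i"
  shows "g + b * d = (b + xpow i 1) * d"
proof -
  have "(b i + 1) * d i \<le> a i * d i"
    using assms(3) by (intro mult_le_mono1) simp
  then have "d i \<le> g i"
    using assms(4) by simp
  then have "g = xpow i 1 * d"
    using gens_eq_xpow_dI[OF assms(1,2)] by simp
  then show ?thesis
    by (simp add: distrib_right add.commute)
qed

lemma le_of_add_mult_dI_le:
  assumes "b \<in> mons n" "x + b * d \<le> c * d"
  shows "b \<le> c"
  unfolding le_fun_def
proof
  fix j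
  show "b j \<le> c j"
  proof (cases "j < n")
    case True
    have "x j + b j * d j \<le> c j * d j"
      using assms(2) by (simp add: le_fun_def)
    then show ?thesis
      using dI_pos[OF True] by (metis add_leD2 mult_le_cancel2)
  next
    case False
    then show ?thesis
      using assms(1) by (simp add: mons_def)
  qed
qed

lemma add_mult_dI_le_imp_eq:
  assumes "g' \<in> I" "g \<in> gens I" "a \<in> mons n" "b \<in> mons n"
    and sum_eq: "(\<Sum>i<n. a i) = (\<Sum>i<n. b i)"
    and le: "g' + b * d \<le> g + a * d"
  shows "g' + b * d = g + a * d"
  \<comment> \<open>If \<open>a \<noteq> b\<close>, then \<open>g = \<mu>\<^sub>i\<close> and \<open>g' = \<mu>\<^sub>k\<close>, and both sides are \<open>\<mu>\<^sup>c\<close> for the same \<open>c\<close>.\<close>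
proof (cases "a = b")
  case True
  then have "g' \<le> g"
    using le by simp
  then show ?thesis
    using True assms(1,2) by (simp add: gens_def)
next
  case False
  then obtain i where i: "i < n" "a i < b i"
    using exists_less_of_sum_eq assms(3,4) sum_eq by blast
  have "b i * d i \<le> g i + a i * d i"
    using le by (simp add: le_fun_def) (metis add_leD2)
  then have c: "g + a * d = (a + xpow i 1) * d"
    using gens_add_mult_dI_eq assms(2) i by blast
  have "b \<le> a + xpow i 1"
    using le_of_add_mult_dI_le assms(4) le unfolding c .
  moreover have "(\<Sum>j<n. (a + xpow i 1) j) = Suc (\<Sum>j<n. b j)"
    using i(1) sum_eq by (simp add: sum.distrib sum_xpow)
  ultimately obtain k where k: "k < n" "a + xpow i 1 = b + xpow k 1"
    using eq_add_xpow_of_le mons_add[OF assms(3) xpow_mons[OF i(1)]] by metis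
  then have c': "g + a * d = xpow k (d k) + b * d"
    using c by (simp add: distrib_right add.commute)
  then have "g' \<le> xpow k (d k)"
    using le by simp
  then have "g' = xpow k (d k)"
    using assms(1) xpow_dI_in_gens[OF k(1)] by (simp add: gens_def)
  then show ?thesis
    using c' by simp
qed

lemma reduction_of_very_good:
  assumes "very_good n I"
  shows "ipow n I 2 = prod_ideal n I J"
proof
  show "prod_ideal n I J \<subseteq> ipow n I 2"
    using ipow_2[OF mono_ideal] prod_ideal_mono[OF J_subset_I] by simp
next
  have sq_mons: "ipow n I 2 \<subseteq> mons n"
    by (simp add: ipow_2[OF mono_ideal] subset_iff mem_prod_ideal)
  have good: "\<forall>l\<ge>1. \<forall>m\<in>gens (ipow n I l). \<exists>a\<in>mons n. (\<Sum>i<n. a i) = l - 1 \<and> m \<in> box n I a"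
    using assms by (simp add: very_good_def good_def)
  show "ipow n I 2 \<subseteq> prod_ideal n I J"
  proof
    fix c
    assume c: "c \<in> ipow n I 2"
    obtain m where m: "m \<in> gens (ipow n I 2)" "m \<le> c"
      using exists_gens_le[OF sq_mons c] by blast
    obtain a where a: "a \<in> mons n" "(\<Sum>i<n. a i) = 1" "m \<in> box n I a"
      using good[rule_format, of 2 m] m(1) by auto
    have "(\<Sum>i<n. a i) = Suc (\<Sum>i<n. (0 :: nat \<Rightarrow> nat) i)"
      using a(2) by simp
    then obtain j where j: "j < n" "a = 0 + xpow j 1"
      using eq_add_xpow_of_le[OF a(1)] by (metis le_fun_def zero_fun_apply zero_le)
    have "m \<in> gens (ipow n I (Suc (\<Sum>i<n. a i)))"
      using m(1) a(2) by (simp add: numeral_2_eq_2)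
    moreover have "m \<in> mons n"
      using m(1) sq_mons by (auto simp: gens_def)
    ultimately have "m - a * d \<in> sub_ideal n I a"
      unfolding mem_sub_ideal using a(3) by (blast intro: mons_diff order_refl)
    then have "m - a * d \<in> I"
      using assms a(1) by (simp add: very_good_def)
    moreover have "xpow j (d j) \<in> J"
      unfolding mem_J using j(1) xpow_mons by blast
    moreover have "m - a * d + xpow j (d j) \<le> c"
      using mult_dI_le_of_mem_box[OF a(3,1)] m(2) j(2) by (simp add: le_fun_def)
    ultimately show "c \<in> prod_ideal n I J"
      unfolding mem_prod_ideal using c sq_mons by blast
  qed
qed

end

section \<open>Powers of \<open>I\<close> when \<open>I\<^sup>2 = IJ\<close>\<close>

locale reduction_number_one = m_primary_monomial_ideal +
  assumes sq_eq_prod_J: "ipow n I 2 = prod_ideal n I J"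
begin

lemma exchange_into_J:
  assumes "x \<in> I" "g \<in> I"
  obtains g' j where "g' \<in> I" "j < n" "g' + xpow j (d j) \<le> x + g"
proof -
  have "x + g \<in> ipow n I 2"
    using assms I_subset_mons by (auto simp: ipow_2[OF mono_ideal] mem_prod_ideal intro: mons_add)
  then obtain g' w where "g' \<in> I" "w \<in> J" "g' + w \<le> x + g"
    by (auto simp: sq_eq_prod_J mem_prod_ideal)
  moreover obtain j where "j < n" "xpow j (d j) \<le> w"
    using calculation(2) by (auto simp: mem_J)
  ultimately show ?thesis
    using that by (meson add_left_mono order_trans)
qed

lemma mem_ipow_Suc: \<comment> \<open>\<open>I\<^bsup>k+1\<^esup> = IJ\<^sup>k\<close>\<close>
  "c \<in> ipow n I (Suc k) \<longleftrightarrow>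
     c \<in> mons n \<and> (\<exists>g\<in>I. \<exists>b\<in>mons n. (\<Sum>i<n. b i) = k \<and> g + b * d \<le> c)"
proof (induction k arbitrary: c)
  case 0
  have shift_0: "(\<exists>b\<in>mons n. (\<Sum>i<n. b i) = 0 \<and> g + b * d \<le> c) \<longleftrightarrow> g \<le> c" for g
  proof
    assume "\<exists>b\<in>mons n. (\<Sum>i<n. b i) = 0 \<and> g + b * d \<le> c"
    then show "g \<le> c"
      using mons_sum_eq_0 by fastforce
  next
    assume "g \<le> c"
    then show "\<exists>b\<in>mons n. (\<Sum>i<n. b i) = 0 \<and> g + b * d \<le> c"
      using zero_mons by (intro bexI[of _ 0]) simp_all
  qed
  have "c \<in> ipow n I (Suc 0) \<longleftrightarrow> c \<in> I"
    using ipow_1[OF mono_ideal] by simp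
  also have "\<dots> \<longleftrightarrow> c \<in> mons n \<and> (\<exists>g\<in>I. g \<le> c)"
    using I_subset_mons I_upward by blast
  finally show ?case
    by (simp only: shift_0)
next
  case (Suc k)
  show ?case
  proof
    assume "c \<in> ipow n I (Suc (Suc k))"
    then obtain x y where c: "c \<in> mons n" "x \<in> I" "y \<in> ipow n I (Suc k)" "x + y \<le> c"
      by (auto simp: mem_prod_ideal)
    then obtain g b where g: "g \<in> I" "b \<in> mons n" "(\<Sum>i<n. b i) = k" "g + b * d \<le> y"
      using Suc.IH by blast
    obtain g' j where g': "g' \<in> I" "j < n" "g' + xpow j (d j) \<le> x + g"
      using exchange_into_J[OF c(2) g(1)] .
    have "g' + (b + xpow j 1) * d = (g' + xpow j (d j)) + b * d"
      by (simp add: distrib_right add_ac)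
    also have "\<dots> \<le> x + (g + b * d)"
      using g'(3) by (simp add: add.assoc[symmetric] add_right_mono)
    also have "\<dots> \<le> c"
      using g(4) c(4) by (meson add_left_mono order_trans)
    finally show "c \<in> mons n \<and> (\<exists>g\<in>I. \<exists>b\<in>mons n. (\<Sum>i<n. b i) = Suc k \<and> g + b * d \<le> c)"
      using c(1) g'(1,2) g(2,3) by (intro conjI bexI[of _ g'] bexI[of _ "b + xpow j 1"])
        (auto simp: sum.distrib sum_xpow intro: mons_add xpow_mons)
  next
    assume "c \<in> mons n \<and> (\<exists>g\<in>I. \<exists>b\<in>mons n. (\<Sum>i<n. b i) = Suc k \<and> g + b * d \<le> c)"
    then obtain g b where c: "c \<in> mons n" "g \<in> I" "b \<in> mons n" "(\<Sum>i<n. b i) = Suc k"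
      and le: "g + b * d \<le> c"
      by blast
    obtain j b' where b': "j < n" "b' \<in> mons n" "(\<Sum>i<n. b' i) = k" "b = b' + xpow j 1"
      using mons_sum_Suc_decomp[OF c(3,4)] .
    have "g + b' * d \<in> mons n"
      using c(2) b'(2) I_subset_mons by (blast intro: mons_add mons_mult)
    then have "g + b' * d \<in> ipow n I (Suc k)"
      using Suc.IH c(2) b'(2,3) by blast
    moreover have "xpow j (d j) + (g + b' * d) \<le> c"
      using le b'(4) by (simp add: distrib_right add_ac)
    ultimately show "c \<in> ipow n I (Suc (Suc k))"
      using c(1) xpow_dI_in_I[OF b'(1)] unfolding ipow.simps(2)[of n I "Suc k"] mem_prod_ideal
      by blast
  qed
qed

lemma gens_ipow_Suc:
  assumes "m \<in> gens (ipow n I (Suc k))"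
  obtains g b where "g \<in> gens I" "b \<in> mons n" "(\<Sum>i<n. b i) = k" "m = g + b * d"
proof -
  have m: "m \<in> ipow n I (Suc k)" "\<forall>h\<in>ipow n I (Suc k). h \<le> m \<longrightarrow> h = m"
    using assms by (simp_all add: gens_def)
  then obtain g b where g: "g \<in> I" "b \<in> mons n" "(\<Sum>i<n. b i) = k" "g + b * d \<le> m"
    using mem_ipow_Suc by blast
  obtain g0 where g0: "g0 \<in> gens I" "g0 \<le> g"
    using exists_gens_le[OF I_subset_mons g(1)] by blast
  then have "g0 \<in> I" "g0 \<in> mons n"
    using I_subset_mons by (auto simp: gens_def)
  then have "g0 + b * d \<in> mons n"
    using g(2) by (blast intro: mons_add mons_mult)
  then have "g0 + b * d \<in> ipow n I (Suc k)"
    using mem_ipow_Suc \<open>g0 \<in> I\<close> g(2,3) by blast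
  moreover have "g0 + b * d \<le> m"
    using g0(2) g(4) by (meson add_right_mono order_trans)
  ultimately have "m = g0 + b * d"
    using m(2) by (metis (no_types))
  then show ?thesis
    using that g0(1) g(2,3) by blast
qed

lemma is_good: "good n I"
  unfolding good_def
proof (intro conjI allI impI ballI m_primary)
  fix l m
  assume "1 \<le> l" "m \<in> gens (ipow n I l)"
  then obtain k where k: "l = Suc k" "m \<in> gens (ipow n I (Suc k))"
    by (cases l) auto
  then obtain g b where "g \<in> gens I" "b \<in> mons n" "(\<Sum>i<n. b i) = k" "m = g + b * d"
    using gens_ipow_Suc by blast
  then show "\<exists>a\<in>mons n. (\<Sum>i<n. a i) = l - 1 \<and> m \<in> box n I a"
    using add_mult_dI_in_box k(1) by auto
qed

lemma sub_ideal_subset: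
  assumes a: "a \<in> mons n"
  shows "sub_ideal n I a \<subseteq> I"
proof
  fix x
  assume "x \<in> sub_ideal n I a"
  then obtain m where x: "x \<in> mons n" "m - a * d \<le> x" and m_box: "m \<in> box n I a"
    and m: "m \<in> gens (ipow n I (Suc (\<Sum>i<n. a i)))"
    unfolding mem_sub_ideal by blast
  obtain g b where g: "g \<in> gens I" "b \<in> mons n" "(\<Sum>i<n. b i) = (\<Sum>i<n. a i)"
    and m_eq: "m = g + b * d"
    using gens_ipow_Suc[OF m] by blast
  have "g \<in> mons n"
    using g(1) I_subset_mons by (auto simp: gens_def)
  have "m - a * d \<in> I"
  proof (cases "b = a")
    case True
    then show ?thesis
      using g(1) m_eq by (simp add: gens_def)
  next
    case False
    then obtain i where i: "i < n" "b i < a i"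
      using exists_less_of_sum_eq g(2) a g(3) by blast
    have "a i * d i \<le> g i + b i * d i"
      using m_box i(1) m_eq by (simp add: mem_box)
    then have m_unit: "m = (b + xpow i 1) * d"
      using gens_add_mult_dI_eq g(1) i m_eq by blast
    have "(\<Sum>j<n. a j) < (\<Sum>j<n. (b + xpow i 1) j)"
      using i(1) g(3) by (simp add: sum.distrib sum_xpow)
    then obtain j where j: "j < n" "a j < (b + xpow i 1) j"
      using exists_less_of_sum_less by blast
    then have "(a j + 1) * d j \<le> m j"
      unfolding m_unit times_fun_apply by (intro mult_le_mono1) simp
    then have "xpow j (d j) \<le> m - a * d"
      by (simp add: le_fun_def xpow_def)
    moreover have "m - a * d \<in> mons n"
      using \<open>g \<in> mons n\<close> g(2) m_eq by (blast intro: mons_diff mons_add mons_mult)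
    ultimately show ?thesis
      using I_upward xpow_dI_in_I[OF j(1)] by blast
  qed
  then show "x \<in> I"
    using I_upward x by blast
qed

lemma subset_sub_ideal:
  assumes a: "a \<in> mons n"
  shows "I \<subseteq> sub_ideal n I a"
proof
  fix x
  assume x: "x \<in> I"
  obtain g where g: "g \<in> gens I" "g \<le> x"
    using exists_gens_le[OF I_subset_mons x] by blast
  have "g \<in> I" "g \<in> mons n"
    using g(1) I_subset_mons by (auto simp: gens_def)
  then have m_mons: "g + a * d \<in> mons n"
    using a by (blast intro: mons_add mons_mult)
  then have m_in: "g + a * d \<in> ipow n I (Suc (\<Sum>i<n. a i))"
    using mem_ipow_Suc \<open>g \<in> I\<close> a by blast
  have "g + a * d \<in> gens (ipow n I (Suc (\<Sum>i<n. a i)))"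
    unfolding gens_def
  proof (intro CollectI conjI ballI impI m_in)
    fix h
    assume h: "h \<in> ipow n I (Suc (\<Sum>i<n. a i))" "h \<le> g + a * d"
    then obtain g' b where g': "g' \<in> I" "b \<in> mons n" "(\<Sum>i<n. b i) = (\<Sum>i<n. a i)"
      "g' + b * d \<le> h"
      using mem_ipow_Suc by blast
    have "g' + b * d \<le> g + a * d"
      using g'(4) h(2) by (rule order_trans)
    then have "g' + b * d = g + a * d"
      by (rule add_mult_dI_le_imp_eq[OF g'(1) g(1) a g'(2) g'(3)[symmetric]])
    then show "h = g + a * d"
      using g'(4) h(2) by (intro antisym) simp_all
  qed
  moreover have "g + a * d \<in> box n I a"
    using add_mult_dI_in_box g(1) a .
  moreover have "g + a * d - a * d \<le> x"
    using g(2) by simp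
  moreover have "x \<in> mons n"
    using x I_subset_mons by blast
  ultimately show "x \<in> sub_ideal n I a"
    unfolding mem_sub_ideal by blast
qed

lemma is_very_good: "very_good n I"
  using is_good sub_ideal_subset subset_sub_ideal by (simp add: very_good_def set_eq_subset)

end

theorem mainTheorem18:
  fixes n :: nat and I :: "(nat \<Rightarrow> nat) set"
  assumes "m_primary n I"
  shows "very_good n I \<longleftrightarrow>
    ipow n I 2 = prod_ideal n I (gen_ideal n {xpow i (dI I i) | i. i < n})"
proof -
  interpret m_primary_monomial_ideal n I
    using assms by unfold_locales
  show ?thesis
  proof
    assume "very_good n I"
    then show "ipow n I 2 = prod_ideal n I J"
      by (rule reduction_of_very_good)
  next
    assume "ipow n I 2 = prod_ideal n I J"
    then interpret reduction_number_one n I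
      by unfold_locales
    show "very_good n I"
      by (rule is_very_good)
  qed
qed

end
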